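(* Let $(K,\mathcal O,k)$ be a $p$-modular system with $\mathcal O$ complete, let $\pi$ generate the maximal ideal of $\mathcal O$, and let $\Lambda$ be an $\mathcal O$-order in a separable $K$-algebra. Then the canonical map $\operatorname{Out}_{\mathcal O}(\Lambda)\to\operatorname{Out}_{\mathcal O}(\Lambda/\pi^s\Lambda)$ is injective for every $s\geq d(\Lambda\otimes_{\mathcal O}\Lambda^{\mathrm{op}})+1$.
   Context: A $p$-modular system $(K,\mathcal O,k)$ consists of a discrete valuation ring $\mathcal O$ of characteristic zero with fraction field $K$ and residue field $k$ of characteristic $p>0$. An $\mathcal O$-order in a separable $K$-algebra is an $\mathcal O$-algebra, free and finitely generated as an $\mathcal O$-module, whose scalar extension to $K$ is separable. $\operatorname{Out}_{\mathcal O}(A)=\operatorname{Aut}_{\mathcal O}(A)/\operatorname{Inn}(A)$. For such an order $\Gamma$, the depth $d(\Gamma)$ is defined by $\pi^{d(\Gamma)}\mathcal O=I(\Gamma)$, where $I(\Gamma)$ is the (nonzero) ideal of elements of $\mathcal O$ annihilating the Hochschild cohomology $H^1(\Gamma,T)$ for all $\Gamma$-$\Gamma$-bimodules $T$. *)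

theory Defs
  imports "HOL-Computational_Algebra.Fraction_Field" "HOL-Computational_Algebra.Primes"
begin

definition dvr_uniformizer :: "'o::idom \<Rightarrow> bool" where
  "dvr_uniformizer pi \<longleftrightarrow> pi \<noteq> 0 \<and> \<not> pi dvd 1 \<and>
     (\<forall>x. x \<noteq> 0 \<longrightarrow> (\<exists>v n. v dvd 1 \<and> x = v * pi ^ n))"

definition pi_complete :: "'o::idom \<Rightarrow> bool" where
  "pi_complete pi \<longleftrightarrow>
     (\<forall>f :: nat \<Rightarrow> 'o. (\<forall>n. pi ^ n dvd (f (Suc n) - f n)) \<longrightarrow>
        (\<exists>x. \<forall>n. pi ^ n dvd (x - f n)))"

definition vec :: "'i set \<Rightarrow> ('i \<Rightarrow> 'a::zero) set" where
  "vec I = {v. \<forall>i. i \<notin> I \<longrightarrow> v i = 0}"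

definition bvec :: "'i \<Rightarrow> 'i \<Rightarrow> 'a::{zero,one}" where
  "bvec i = (\<lambda>j. if j = i then 1 else 0)"

definition vadd :: "('i \<Rightarrow> 'a::plus) \<Rightarrow> ('i \<Rightarrow> 'a) \<Rightarrow> 'i \<Rightarrow> 'a" where
  "vadd x y = (\<lambda>i. x i + y i)"

definition vsmult :: "'a::times \<Rightarrow> ('i \<Rightarrow> 'a) \<Rightarrow> 'i \<Rightarrow> 'a" where
  "vsmult a x = (\<lambda>i. a * x i)"

definition sc_mult :: "'i set \<Rightarrow> ('i \<Rightarrow> 'i \<Rightarrow> 'i \<Rightarrow> 'a::comm_ring_1)
    \<Rightarrow> ('i \<Rightarrow> 'a) \<Rightarrow> ('i \<Rightarrow> 'a) \<Rightarrow> 'i \<Rightarrow> 'a" where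
  "sc_mult I C x y = (\<lambda>k. if k \<in> I then (\<Sum>i\<in>I. \<Sum>j\<in>I. x i * y j * C i j k) else 0)"

definition sc_algebra :: "'i set \<Rightarrow> ('i \<Rightarrow> 'i \<Rightarrow> 'i \<Rightarrow> 'a::comm_ring_1) \<Rightarrow> ('i \<Rightarrow> 'a) \<Rightarrow> bool" where
  "sc_algebra I C u \<longleftrightarrow> finite I \<and> u \<in> vec I \<and>
     (\<forall>x\<in>vec I. \<forall>y\<in>vec I. \<forall>z\<in>vec I.
        sc_mult I C (sc_mult I C x y) z = sc_mult I C x (sc_mult I C y z)) \<and>
     (\<forall>x\<in>vec I. sc_mult I C u x = x \<and> sc_mult I C x u = x)"

text \<open>Separability over a field: existence of a separability idempotent
  e = sum e_ij b_i (x) b_j in A (x) A^op with mu(e) = 1 and a e = e a.\<close>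
definition sc_separable :: "'i set \<Rightarrow> ('i \<Rightarrow> 'i \<Rightarrow> 'i \<Rightarrow> 'k::field) \<Rightarrow> ('i \<Rightarrow> 'k) \<Rightarrow> bool" where
  "sc_separable I C u \<longleftrightarrow> sc_algebra I C u \<and>
     (\<exists>e :: 'i \<Rightarrow> 'i \<Rightarrow> 'k.
        (\<lambda>k. \<Sum>i\<in>I. \<Sum>j\<in>I. e i j * sc_mult I C (bvec i) (bvec j) k) = u \<and>
        (\<forall>a\<in>vec I. \<forall>k\<in>I. \<forall>l\<in>I.
           (\<Sum>i\<in>I. e i l * sc_mult I C a (bvec i) k) =
           (\<Sum>j\<in>I. e k j * sc_mult I C (bvec j) a l)))"

text \<open>Enveloping algebra Lambda (x)_O Lambda^op, basis b_i (x) b_j.\<close>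
definition env_C :: "('i \<Rightarrow> 'i \<Rightarrow> 'i \<Rightarrow> 'a::comm_ring_1)
    \<Rightarrow> ('i \<times> 'i) \<Rightarrow> ('i \<times> 'i) \<Rightarrow> ('i \<times> 'i) \<Rightarrow> 'a" where
  "env_C c = (\<lambda>(i, j) (k, l) (m, r). c i k m * c l j r)"

definition env_u :: "('i \<Rightarrow> 'a::comm_ring_1) \<Rightarrow> ('i \<times> 'i) \<Rightarrow> 'a" where
  "env_u u = (\<lambda>(i, j). u i * u j)"

record ('g, 't) bimod =
  bm_carrier :: "'t set"
  bm_add :: "'t \<Rightarrow> 't \<Rightarrow> 't"
  bm_zero :: 't
  bm_lact :: "'g \<Rightarrow> 't \<Rightarrow> 't"
  bm_ract :: "'t \<Rightarrow> 'g \<Rightarrow> 't"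

text \<open>A Gamma-Gamma-bimodule for the O-algebra Gamma = (J, C, u), with O acting centrally.\<close>
definition is_bimodule :: "'j set \<Rightarrow> ('j \<Rightarrow> 'j \<Rightarrow> 'j \<Rightarrow> 'o::comm_ring_1) \<Rightarrow> ('j \<Rightarrow> 'o)
    \<Rightarrow> ('j \<Rightarrow> 'o, 't) bimod \<Rightarrow> bool" where
  "is_bimodule J C u T \<longleftrightarrow>
     (let M = bm_carrier T; ad = bm_add T; z = bm_zero T; la = bm_lact T; ra = bm_ract T;
          mu = sc_mult J C in
     z \<in> M \<and> (\<forall>s\<in>M. \<forall>t\<in>M. ad s t \<in> M) \<and>
     (\<forall>x\<in>vec J. \<forall>t\<in>M. la x t \<in> M \<and> ra t x \<in> M) \<and>
     (\<forall>r\<in>M. \<forall>s\<in>M. \<forall>t\<in>M. ad (ad r s) t = ad r (ad s t)) \<and>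
     (\<forall>s\<in>M. \<forall>t\<in>M. ad s t = ad t s) \<and>
     (\<forall>t\<in>M. ad z t = t) \<and>
     (\<forall>t\<in>M. \<exists>t'\<in>M. ad t t' = z) \<and>
     (\<forall>x\<in>vec J. \<forall>y\<in>vec J. \<forall>t\<in>M. la (vadd x y) t = ad (la x t) (la y t)) \<and>
     (\<forall>x\<in>vec J. \<forall>s\<in>M. \<forall>t\<in>M. la x (ad s t) = ad (la x s) (la x t)) \<and>
     (\<forall>x\<in>vec J. \<forall>y\<in>vec J. \<forall>t\<in>M. la (mu x y) t = la x (la y t)) \<and>
     (\<forall>t\<in>M. la u t = t) \<and>
     (\<forall>x\<in>vec J. \<forall>y\<in>vec J. \<forall>t\<in>M. ra t (vadd x y) = ad (ra t x) (ra t y)) \<and>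
     (\<forall>x\<in>vec J. \<forall>s\<in>M. \<forall>t\<in>M. ra (ad s t) x = ad (ra s x) (ra t x)) \<and>
     (\<forall>x\<in>vec J. \<forall>y\<in>vec J. \<forall>t\<in>M. ra t (mu x y) = ra (ra t x) y) \<and>
     (\<forall>t\<in>M. ra t u = t) \<and>
     (\<forall>x\<in>vec J. \<forall>y\<in>vec J. \<forall>t\<in>M. la x (ra t y) = ra (la x t) y) \<and>
     (\<forall>a::'o. \<forall>t\<in>M. la (vsmult a u) t = ra t (vsmult a u)))"

definition is_derivation :: "'j set \<Rightarrow> ('j \<Rightarrow> 'j \<Rightarrow> 'j \<Rightarrow> 'o::comm_ring_1) \<Rightarrow> ('j \<Rightarrow> 'o)
    \<Rightarrow> ('j \<Rightarrow> 'o, 't) bimod \<Rightarrow> (('j \<Rightarrow> 'o) \<Rightarrow> 't) \<Rightarrow> bool" where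
  "is_derivation J C u T D \<longleftrightarrow>
     (\<forall>x\<in>vec J. D x \<in> bm_carrier T) \<and>
     (\<forall>x\<in>vec J. \<forall>y\<in>vec J. D (vadd x y) = bm_add T (D x) (D y)) \<and>
     (\<forall>a. \<forall>x\<in>vec J. D (vsmult a x) = bm_lact T (vsmult a u) (D x)) \<and>
     (\<forall>x\<in>vec J. \<forall>y\<in>vec J.
        D (sc_mult J C x y) = bm_add T (bm_lact T x (D y)) (bm_ract T (D x) y))"

definition is_inner_derivation :: "'j set \<Rightarrow> ('j \<Rightarrow> 'o::comm_ring_1, 't) bimod
    \<Rightarrow> (('j \<Rightarrow> 'o) \<Rightarrow> 't) \<Rightarrow> bool" where
  "is_inner_derivation J T D \<longleftrightarrow>
     (\<exists>t\<in>bm_carrier T. \<forall>x\<in>vec J. bm_lact T x t = bm_add T (D x) (bm_ract T t x))"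

text \<open>I(Gamma): elements of O annihilating H^1(Gamma, T) for all bimodules T.
  Bimodules are taken with carrier in the type of elements of Gamma, which is large
  enough.\<close>
definition ann_ideal :: "'j set \<Rightarrow> ('j \<Rightarrow> 'j \<Rightarrow> 'j \<Rightarrow> 'o::comm_ring_1) \<Rightarrow> ('j \<Rightarrow> 'o) \<Rightarrow> 'o set" where
  "ann_ideal J C u = {a. \<forall>T :: ('j \<Rightarrow> 'o, 'j \<Rightarrow> 'o) bimod. is_bimodule J C u T \<longrightarrow>
      (\<forall>D. is_derivation J C u T D \<longrightarrow>
         is_inner_derivation J T (\<lambda>x. bm_lact T (vsmult a u) (D x)))}"

definition is_depth :: "'o::comm_ring_1 \<Rightarrow> 'j set \<Rightarrow> ('j \<Rightarrow> 'j \<Rightarrow> 'j \<Rightarrow> 'o) \<Rightarrow> ('j \<Rightarrow> 'o) \<Rightarrow> nat \<Rightarrow> bool" where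
  "is_depth pi J C u d \<longleftrightarrow> ann_ideal J C u = {pi ^ d * x | x. True}"

definition is_alg_aut :: "'i set \<Rightarrow> ('i \<Rightarrow> 'i \<Rightarrow> 'i \<Rightarrow> 'o::comm_ring_1) \<Rightarrow> ('i \<Rightarrow> 'o)
    \<Rightarrow> (('i \<Rightarrow> 'o) \<Rightarrow> ('i \<Rightarrow> 'o)) \<Rightarrow> bool" where
  "is_alg_aut I C u f \<longleftrightarrow> bij_betw f (vec I) (vec I) \<and>
     (\<forall>x\<in>vec I. \<forall>y\<in>vec I. f (vadd x y) = vadd (f x) (f y)) \<and>
     (\<forall>a. \<forall>x\<in>vec I. f (vsmult a x) = vsmult a (f x)) \<and>
     (\<forall>x\<in>vec I. \<forall>y\<in>vec I. f (sc_mult I C x y) = sc_mult I C (f x) (f y)) \<and>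
     f u = u"

definition cong_pi :: "'o::comm_ring_1 \<Rightarrow> nat \<Rightarrow> ('i \<Rightarrow> 'o) \<Rightarrow> ('i \<Rightarrow> 'o) \<Rightarrow> bool" where
  "cong_pi pi s x y \<longleftrightarrow> (\<forall>i. pi ^ s dvd (x i - y i))"

definition same_outer :: "'i set \<Rightarrow> ('i \<Rightarrow> 'i \<Rightarrow> 'i \<Rightarrow> 'o::comm_ring_1) \<Rightarrow> ('i \<Rightarrow> 'o)
    \<Rightarrow> (('i \<Rightarrow> 'o) \<Rightarrow> ('i \<Rightarrow> 'o)) \<Rightarrow> (('i \<Rightarrow> 'o) \<Rightarrow> ('i \<Rightarrow> 'o)) \<Rightarrow> bool" where
  "same_outer I C u f g \<longleftrightarrow> (\<exists>w\<in>vec I. \<exists>w'\<in>vec I.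
      sc_mult I C w w' = u \<and> sc_mult I C w' w = u \<and>
      (\<forall>x\<in>vec I. f x = sc_mult I C (sc_mult I C w (g x)) w'))"

definition same_outer_mod :: "'o::comm_ring_1 \<Rightarrow> nat \<Rightarrow> 'i set \<Rightarrow> ('i \<Rightarrow> 'i \<Rightarrow> 'i \<Rightarrow> 'o)
    \<Rightarrow> ('i \<Rightarrow> 'o) \<Rightarrow> (('i \<Rightarrow> 'o) \<Rightarrow> ('i \<Rightarrow> 'o)) \<Rightarrow> (('i \<Rightarrow> 'o) \<Rightarrow> ('i \<Rightarrow> 'o)) \<Rightarrow> bool" where
  "same_outer_mod pi s I C u f g \<longleftrightarrow> (\<exists>w\<in>vec I. \<exists>w'\<in>vec I.
      cong_pi pi s (sc_mult I C w w') u \<and> cong_pi pi s (sc_mult I C w' w) u \<and>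
      (\<forall>x\<in>vec I. cong_pi pi s (f x) (sc_mult I C (sc_mult I C w (g x)) w')))"

definition out_reduction_injective :: "'o::comm_ring_1 \<Rightarrow> nat \<Rightarrow> 'i set
    \<Rightarrow> ('i \<Rightarrow> 'i \<Rightarrow> 'i \<Rightarrow> 'o) \<Rightarrow> ('i \<Rightarrow> 'o) \<Rightarrow> bool" where
  "out_reduction_injective pi s I C u \<longleftrightarrow>
     (\<forall>f g. is_alg_aut I C u f \<longrightarrow> is_alg_aut I C u g \<longrightarrow>
        same_outer_mod pi s I C u f g \<longrightarrow> same_outer I C u f g)"

end

theory Submission
  imports Defs
begin

(* Suppose the automorphisms f and g agree in Out(Lambda / pi^s Lambda): f(x) w = w g(x) mod pi^s
  with w a unit mod pi^s. Then delta(x) = (f(x) w - w g(x)) / pi^s is an (f,g)-twisted derivation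
  of Lambda. Through a (x) b |-> (z |-> delta(a) g(z b)) it becomes a derivation of the enveloping
  algebra Lambda (x) Lambda^op into the bimodule Hom(Lambda, Lambda), so pi^d times it is inner,
  which after evaluation at 1 reads pi^d delta(x) = f(x) t - t g(x) for some t in Lambda.
  Consequently W = w - pi^(s-d) t intertwines exactly, f(x) W = W g(x), and since s - d >= 1 we
  have W = w mod pi; a unit mod pi is a unit of the pi-adically complete Lambda (Neumann series),
  so f and g differ by the inner automorphism of W. *)

section \<open>Coordinate vectors\<close>

definition vsum :: "'k set \<Rightarrow> ('k \<Rightarrow> 'i \<Rightarrow> 'a::comm_monoid_add) \<Rightarrow> 'i \<Rightarrow> 'a" where
  "vsum K X = (\<lambda>i. \<Sum>k\<in>K. X k i)"

definition vsub :: "('i \<Rightarrow> 'a::minus) \<Rightarrow> ('i \<Rightarrow> 'a) \<Rightarrow> 'i \<Rightarrow> 'a" where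
  "vsub x y = (\<lambda>i. x i - y i)"

lemmas vec_op_defs = vsum_def vsub_def vadd_def vsmult_def

lemma sc_mult_vec [simp]: "sc_mult J C x y \<in> vec J"
  by (simp add: vec_def sc_mult_def)

lemma vadd_vec [simp]: "(x :: _ \<Rightarrow> 'a::comm_ring_1) \<in> vec J \<Longrightarrow> y \<in> vec J \<Longrightarrow> vadd x y \<in> vec J"
  by (simp add: vec_def vadd_def)

lemma vsub_vec [simp]: "(x :: _ \<Rightarrow> 'a::comm_ring_1) \<in> vec J \<Longrightarrow> y \<in> vec J \<Longrightarrow> vsub x y \<in> vec J"
  by (simp add: vec_def vsub_def)

lemma vsmult_vec [simp]: "(x :: _ \<Rightarrow> 'a::comm_ring_1) \<in> vec J \<Longrightarrow> vsmult a x \<in> vec J"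
  by (simp add: vec_def vsmult_def)

lemma vsum_vec [simp]: "(\<And>k. k \<in> K \<Longrightarrow> X k \<in> vec J) \<Longrightarrow> vsum K X \<in> vec J"
  by (simp add: vec_def vsum_def)

lemma bvec_vec [simp]: "i \<in> J \<Longrightarrow> bvec i \<in> vec J"
  by (simp add: vec_def bvec_def)

lemma zero_vec [simp]: "(\<lambda>_. 0) \<in> vec J"
  by (simp add: vec_def)

lemma vsmult_cancel:
  fixes p :: "'a::idom"
  assumes "p \<noteq> 0" and "vsmult p x = vsmult p y"
  shows "x = y"
  using assms by (auto simp: vsmult_def fun_eq_iff)

lemma sc_mult_vadd_left: "sc_mult J C (vadd x y) z = vadd (sc_mult J C x z) (sc_mult J C y z)"
  by (auto simp: sc_mult_def vadd_def fun_eq_iff sum.distrib algebra_simps)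

lemma sc_mult_vadd_right: "sc_mult J C z (vadd x y) = vadd (sc_mult J C z x) (sc_mult J C z y)"
  by (auto simp: sc_mult_def vadd_def fun_eq_iff sum.distrib algebra_simps)

lemma sc_mult_vsub_left: "sc_mult J C (vsub x y) z = vsub (sc_mult J C x z) (sc_mult J C y z)"
  by (auto simp: sc_mult_def vsub_def fun_eq_iff sum_subtractf algebra_simps)

lemma sc_mult_vsub_right: "sc_mult J C z (vsub x y) = vsub (sc_mult J C z x) (sc_mult J C z y)"
  by (auto simp: sc_mult_def vsub_def fun_eq_iff sum_subtractf algebra_simps)

lemma sc_mult_vsmult_left: "sc_mult J C (vsmult a x) z = vsmult a (sc_mult J C x z)"
  by (auto simp: sc_mult_def vsmult_def fun_eq_iff sum_distrib_left algebra_simps)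

lemma sc_mult_vsmult_right: "sc_mult J C z (vsmult a x) = vsmult a (sc_mult J C z x)"
  by (auto simp: sc_mult_def vsmult_def fun_eq_iff sum_distrib_left algebra_simps)

lemma sc_mult_vsum_left: "sc_mult J C (vsum K X) z = vsum K (\<lambda>k. sc_mult J C (X k) z)"
  by (auto simp: sc_mult_def vsum_def fun_eq_iff sum_distrib_right sum.swap[of _ K])

lemma sc_mult_vsum_right: "sc_mult J C z (vsum K X) = vsum K (\<lambda>k. sc_mult J C z (X k))"
  by (auto simp: sc_mult_def vsum_def fun_eq_iff sum_distrib_left sum_distrib_right
      sum.swap[of _ K] mult.assoc)

lemma sc_mult_zero_left [simp]: "sc_mult J C (\<lambda>_. 0) z = (\<lambda>_. 0)"
  by (auto simp: sc_mult_def fun_eq_iff)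

lemma sc_mult_zero_right [simp]: "sc_mult J C z (\<lambda>_. 0) = (\<lambda>_. 0)"
  by (auto simp: sc_mult_def fun_eq_iff)

lemma sum_bvec_mult:
  "finite J \<Longrightarrow> (\<Sum>i\<in>J. bvec p i * (F i :: 'a::comm_ring_1)) = (if p \<in> J then F p else 0)"
  by (simp add: bvec_def if_distrib if_distribR sum.delta cong: if_cong)

lemma sc_mult_bvec:
  "finite J \<Longrightarrow> p \<in> J \<Longrightarrow> q \<in> J \<Longrightarrow> m \<in> J \<Longrightarrow> sc_mult J C (bvec p) (bvec q) m = C p q m"
  by (simp add: sc_mult_def mult.assoc sum_distrib_left[symmetric] sum_bvec_mult)

lemma vec_eq_vsum_bvec:
  assumes "finite J" and "(x :: _ \<Rightarrow> 'a::comm_ring_1) \<in> vec J"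
  shows "x = vsum J (\<lambda>i. vsmult (x i) (bvec i))"
proof
  fix k
  have "(\<Sum>i\<in>J. x i * bvec i k) = (\<Sum>i\<in>J. if i = k then x k else 0)"
    by (rule sum.cong) (auto simp: bvec_def)
  also have "\<dots> = x k"
    using assms by (simp add: sum.delta' vec_def)
  finally show "x k = vsum J (\<lambda>i. vsmult (x i) (bvec i)) k"
    by (simp add: vsum_def vsmult_def)
qed

lemma vsmult_vsum: "vsmult (a :: 'a::comm_ring_1) (vsum K X) = vsum K (\<lambda>k. vsmult a (X k))"
  by (simp add: vec_op_defs sum_distrib_left)

lemma vsmult_vsmult [simp]: "vsmult (a :: 'a::comm_ring_1) (vsmult b x) = vsmult (a * b) x"
  by (simp add: vec_op_defs mult.assoc)

lemma vsmult_vadd: "vsmult (a :: 'a::comm_ring_1) (vadd x y) = vadd (vsmult a x) (vsmult a y)"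
  by (simp add: vec_op_defs algebra_simps)

lemma vsum_cong: "(\<And>k. k \<in> K \<Longrightarrow> X k = Y k) \<Longrightarrow> vsum K X = vsum K Y"
  by (simp add: vsum_def)

lemma vsum_vadd: "vsum K (\<lambda>k. vadd (X k :: _ \<Rightarrow> 'a::comm_ring_1) (Y k)) = vadd (vsum K X) (vsum K Y)"
  by (simp add: vec_op_defs sum.distrib)

lemma vsum_cartesian: "vsum (A \<times> B) X = vsum A (\<lambda>a. vsum B (\<lambda>b. X (a, b)))"
  by (simp add: vsum_def sum.cartesian_product)

definition vdiv :: "'a::idom \<Rightarrow> ('i \<Rightarrow> 'a) \<Rightarrow> 'i \<Rightarrow> 'a" where
  "vdiv p x = (\<lambda>i. SOME q. x i = p * q)"

lemma vsmult_vdiv: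
  assumes "\<And>i. p dvd x i"
  shows "vsmult p (vdiv p x) = x"
proof
  fix i
  from assms[of i] have "\<exists>q. x i = p * q"
    by (auto simp: dvd_def)
  from someI_ex[OF this] show "vsmult p (vdiv p x) i = x i"
    by (simp add: vdiv_def vsmult_def)
qed

definition vlinear :: "'i set \<Rightarrow> (('i \<Rightarrow> 'a::comm_ring_1) \<Rightarrow> ('i \<Rightarrow> 'a)) \<Rightarrow> bool" where
  "vlinear I H \<longleftrightarrow> (\<forall>x\<in>vec I. H x \<in> vec I) \<and>
     (\<forall>x\<in>vec I. \<forall>y\<in>vec I. H (vadd x y) = vadd (H x) (H y)) \<and>
     (\<forall>a. \<forall>x\<in>vec I. H (vsmult a x) = vsmult a (H x))"

lemma vlinear_apply_vec: "vlinear I H \<Longrightarrow> x \<in> vec I \<Longrightarrow> H x \<in> vec I"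
  by (simp add: vlinear_def)

lemma vlinear_apply_vadd:
  "vlinear I H \<Longrightarrow> x \<in> vec I \<Longrightarrow> y \<in> vec I \<Longrightarrow> H (vadd x y) = vadd (H x) (H y)"
  by (simp add: vlinear_def)

lemma vlinear_apply_vsmult: "vlinear I H \<Longrightarrow> x \<in> vec I \<Longrightarrow> H (vsmult a x) = vsmult a (H x)"
  by (simp add: vlinear_def)

lemma vlinear_apply_vsum:
  assumes "vlinear I H" and "finite K" and "\<And>k. k \<in> K \<Longrightarrow> X k \<in> vec I"
  shows "H (vsum K (\<lambda>k. vsmult (a k) (X k))) = vsum K (\<lambda>k. vsmult (a k) (H (X k)))"
  using assms(2,3)
proof (induction K rule: finite_induct)
  case empty
  have "H (vsmult 0 (\<lambda>_. 0)) = vsmult 0 (H (\<lambda>_. 0))"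
    using assms(1) by (simp add: vlinear_apply_vsmult)
  then show ?case
    by (simp add: vsum_def vsmult_def)
next
  case (insert k K)
  have insert_eq: "vsum (insert k K) Y = vadd (Y k) (vsum K Y)" for Y
    using insert by (simp add: vsum_def vadd_def)
  show ?case
    using insert assms(1) by (simp add: insert_eq vlinear_apply_vadd vlinear_apply_vsmult)
qed

lemma vlinear_id: "vlinear I (\<lambda>x. x)"
  by (simp add: vlinear_def)

lemma vlinear_comp: "vlinear I F \<Longrightarrow> vlinear I G \<Longrightarrow> vlinear I (\<lambda>x. F (G x))"
  by (simp add: vlinear_def)

lemma vlinear_sc_mult_left: "vlinear I (\<lambda>x. sc_mult I C x b)"
  by (simp add: vlinear_def sc_mult_vadd_left sc_mult_vsmult_left)

lemma vlinear_sc_mult_right: "vlinear I (\<lambda>x. sc_mult I C b x)"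
  by (simp add: vlinear_def sc_mult_vadd_right sc_mult_vsmult_right)

lemma vlinear_vadd:
  "vlinear I F \<Longrightarrow> vlinear I G \<Longrightarrow> vlinear I (\<lambda>x. vadd (F x) (G x))"
  by (auto simp: vlinear_def) (auto simp: vec_op_defs algebra_simps)

lemma vlinear_vsmult: "vlinear I F \<Longrightarrow> vlinear I (\<lambda>x. vsmult a (F x))"
  by (auto simp: vlinear_def) (auto simp: vec_op_defs algebra_simps)

lemma vlinear_vsum:
  assumes "\<And>k. k \<in> K \<Longrightarrow> vlinear I (F k)"
  shows "vlinear I (\<lambda>x. vsum K (\<lambda>k. F k x))"
proof -
  have "vsum K (\<lambda>k. F k (vadd x y)) = vadd (vsum K (\<lambda>k. F k x)) (vsum K (\<lambda>k. F k y))"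
    if "x \<in> vec I" "y \<in> vec I" for x y
    unfolding vsum_vadd[symmetric] using assms that by (intro vsum_cong vlinear_apply_vadd)
  moreover have "vsum K (\<lambda>k. F k (vsmult a x)) = vsmult a (vsum K (\<lambda>k. F k x))"
    if "x \<in> vec I" for x a
    unfolding vsmult_vsum using assms that by (intro vsum_cong vlinear_apply_vsmult)
  ultimately show ?thesis
    using assms by (auto simp: vlinear_def)
qed

lemma vlinear_vdiv:
  fixes p :: "'a::idom" and e :: "('i \<Rightarrow> 'a) \<Rightarrow> 'i \<Rightarrow> 'a"
  assumes lin: "vlinear I e" and p: "p \<noteq> 0" and dvd: "\<And>x i. x \<in> vec I \<Longrightarrow> p dvd e x i"
  shows "vlinear I (\<lambda>x. vdiv p (e x))"
proof -
  have div: "vsmult p (vdiv p (e x)) = e x" if "x \<in> vec I" for x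
    using dvd[OF that] by (rule vsmult_vdiv)
  show ?thesis
    unfolding vlinear_def
  proof (intro conjI ballI allI)
    show "vdiv p (e x) \<in> vec I" if x: "x \<in> vec I" for x
    proof -
      have "p * vdiv p (e x) i = 0" if "i \<notin> I" for i
        using fun_cong[OF div[OF x], of i] vlinear_apply_vec[OF lin x] that
        by (simp add: vsmult_def vec_def)
      with p show ?thesis
        by (simp add: vec_def)
    qed
    fix x y :: "'i \<Rightarrow> 'a"
    assume x: "x \<in> vec I" and y: "y \<in> vec I"
    have "vsmult p (vdiv p (e (vadd x y))) = vadd (e x) (e y)"
      unfolding div[OF vadd_vec[OF x y]] by (rule vlinear_apply_vadd[OF lin x y])
    also have "\<dots> = vsmult p (vadd (vdiv p (e x)) (vdiv p (e y)))"
      by (simp only: vsmult_vadd div x y)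
    finally show "vdiv p (e (vadd x y)) = vadd (vdiv p (e x)) (vdiv p (e y))"
      by (rule vsmult_cancel[OF p])
  next
    fix a :: 'a and x :: "'i \<Rightarrow> 'a"
    assume x: "x \<in> vec I"
    have "vsmult p (vdiv p (e (vsmult a x))) = vsmult a (vsmult p (vdiv p (e x)))"
      unfolding div[OF vsmult_vec[OF x]] div[OF x] by (rule vlinear_apply_vsmult[OF lin x])
    also have "\<dots> = vsmult p (vsmult a (vdiv p (e x)))"
      by (simp add: mult.commute)
    finally show "vdiv p (e (vsmult a x)) = vsmult a (vdiv p (e x))"
      by (rule vsmult_cancel[OF p])
  qed
qed

definition vcomb :: "'j set \<Rightarrow> ('j \<Rightarrow> 'a::comm_ring_1) \<Rightarrow> ('j \<Rightarrow> 'i \<Rightarrow> 'a) \<Rightarrow> 'i \<Rightarrow> 'a" where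
  "vcomb J g Q = vsum J (\<lambda>p. vsmult (g p) (Q p))"

definition vtensor :: "('i \<Rightarrow> 'a::comm_ring_1) \<Rightarrow> ('i \<Rightarrow> 'a) \<Rightarrow> 'i \<times> 'i \<Rightarrow> 'a" where
  "vtensor x y = (\<lambda>p. x (fst p) * y (snd p))"

lemma vtensor_vec [simp]: "x \<in> vec I \<Longrightarrow> y \<in> vec I \<Longrightarrow> vtensor x y \<in> vec (I \<times> I)"
  by (auto simp: vec_def vtensor_def)

lemma vcomb_vec: "(\<And>p. p \<in> J \<Longrightarrow> Q p \<in> vec I) \<Longrightarrow> vcomb J g Q \<in> vec I"
  by (simp add: vcomb_def vec_def vec_op_defs)

lemma vcomb_vadd: "vcomb J (vadd x y) Q = vadd (vcomb J x Q) (vcomb J y Q)"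
  by (simp add: vcomb_def vec_op_defs sum.distrib algebra_simps)

lemma vcomb_vsmult: "vcomb J (vsmult a x) Q = vsmult a (vcomb J x Q)"
  by (simp add: vcomb_def vec_op_defs sum_distrib_left algebra_simps)

lemma vcomb_vtensor:
  "vcomb (I \<times> I) (vtensor a b) Q = vsum I (\<lambda>i. vsum I (\<lambda>j. vsmult (a i * b j) (Q (i, j))))"
  by (simp add: vcomb_def vtensor_def vsum_cartesian)

lemma vlinear_vcomb: "(\<And>p. p \<in> J \<Longrightarrow> vlinear I (F p)) \<Longrightarrow> vlinear I (\<lambda>x. vcomb J g (\<lambda>p. F p x))"
  unfolding vcomb_def by (intro vlinear_vsum vlinear_vsmult)

lemma bilinear_eq_vsum_bvec:
  fixes a b :: "'i \<Rightarrow> 'a::comm_ring_1"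
  assumes fin: "finite I" and a: "a \<in> vec I" and b: "b \<in> vec I"
    and lin1: "vlinear I (\<lambda>x. \<Phi> x b)" and lin2: "\<And>i. i \<in> I \<Longrightarrow> vlinear I (\<Phi> (bvec i))"
  shows "vsum I (\<lambda>i. vsum I (\<lambda>j. vsmult (a i * b j) (\<Phi> (bvec i) (bvec j)))) = \<Phi> a b"
proof -
  have "vsum I (\<lambda>j. vsmult (a i * b j) (\<Phi> (bvec i) (bvec j))) = vsmult (a i) (\<Phi> (bvec i) b)"
    if i: "i \<in> I" for i
  proof -
    have "vsum I (\<lambda>j. vsmult (a i * b j) (\<Phi> (bvec i) (bvec j))) =
        vsmult (a i) (vsum I (\<lambda>j. vsmult (b j) (\<Phi> (bvec i) (bvec j))))"
      by (simp add: vsmult_vsum)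
    also have "vsum I (\<lambda>j. vsmult (b j) (\<Phi> (bvec i) (bvec j))) = \<Phi> (bvec i) b"
      using vlinear_apply_vsum[OF lin2[OF i] fin, of bvec b] vec_eq_vsum_bvec[OF fin b] by simp
    finally show ?thesis .
  qed
  then have "vsum I (\<lambda>i. vsum I (\<lambda>j. vsmult (a i * b j) (\<Phi> (bvec i) (bvec j)))) =
      vsum I (\<lambda>i. vsmult (a i) (\<Phi> (bvec i) b))"
    by (rule vsum_cong)
  also have "\<dots> = \<Phi> a b"
    using vlinear_apply_vsum[OF lin1 fin, of bvec a] vec_eq_vsum_bvec[OF fin a] by simp
  finally show ?thesis .
qed

section \<open>Algebras given by structure constants and their enveloping algebras\<close>

definition env_act :: "'i set \<Rightarrow> ('i \<Rightarrow> 'i \<Rightarrow> 'i \<Rightarrow> 'a::comm_ring_1) \<Rightarrow> (('i \<Rightarrow> 'a) \<Rightarrow> ('i \<Rightarrow> 'a))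
    \<Rightarrow> (('i \<Rightarrow> 'a) \<Rightarrow> ('i \<Rightarrow> 'a)) \<Rightarrow> ('i \<times> 'i \<Rightarrow> 'a) \<Rightarrow> ('i \<Rightarrow> 'a) \<Rightarrow> 'i \<Rightarrow> 'a" where
  "env_act I c F G y m =
     vcomb (I \<times> I) y (\<lambda>p. sc_mult I c (sc_mult I c (F (bvec (fst p))) m) (G (bvec (snd p))))"

lemma env_act_vec [simp]: "env_act I c F G y m \<in> vec I"
  by (simp add: env_act_def vcomb_vec)

lemma vlinear_env_act: "vlinear I (env_act I c F G y)"
  unfolding env_act_def
  by (intro vlinear_vcomb vlinear_comp[OF vlinear_sc_mult_left] vlinear_sc_mult_left
      vlinear_sc_mult_right)

lemma env_act_vadd:
  "env_act I c F G (vadd x y) m = vadd (env_act I c F G x m) (env_act I c F G y m)"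
  by (simp add: env_act_def vcomb_vadd)

locale sc_alg =
  fixes I :: "'i set" and c :: "'i \<Rightarrow> 'i \<Rightarrow> 'i \<Rightarrow> 'o::comm_ring_1" and u :: "'i \<Rightarrow> 'o"
  assumes sc_algebra: "sc_algebra I c u"
begin

abbreviation M :: "('i \<Rightarrow> 'o) \<Rightarrow> ('i \<Rightarrow> 'o) \<Rightarrow> 'i \<Rightarrow> 'o" where
  "M \<equiv> sc_mult I c"

abbreviation env_mult :: "('i \<times> 'i \<Rightarrow> 'o) \<Rightarrow> ('i \<times> 'i \<Rightarrow> 'o) \<Rightarrow> 'i \<times> 'i \<Rightarrow> 'o" where
  "env_mult \<equiv> sc_mult (I \<times> I) (env_C c)"

lemma finite_I [simp]: "finite I"
  using sc_algebra by (simp add: sc_algebra_def)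

lemma unit_vec [simp]: "u \<in> vec I"
  using sc_algebra by (simp add: sc_algebra_def)

lemma mult_assoc [simp]: "x \<in> vec I \<Longrightarrow> y \<in> vec I \<Longrightarrow> z \<in> vec I \<Longrightarrow> M (M x y) z = M x (M y z)"
  using sc_algebra by (simp add: sc_algebra_def)

lemma mult_unit_left [simp]: "x \<in> vec I \<Longrightarrow> M u x = x"
  using sc_algebra by (simp add: sc_algebra_def)

lemma mult_unit_right [simp]: "x \<in> vec I \<Longrightarrow> M x u = x"
  using sc_algebra by (simp add: sc_algebra_def)

definition alg_hom :: "(('i \<Rightarrow> 'o) \<Rightarrow> ('i \<Rightarrow> 'o)) \<Rightarrow> bool" where
  "alg_hom F \<longleftrightarrow> vlinear I F \<and> (\<forall>x\<in>vec I. \<forall>y\<in>vec I. F (M x y) = M (F x) (F y)) \<and> F u = u"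

lemma alg_hom_id: "alg_hom (\<lambda>x. x)"
  by (simp add: alg_hom_def vlinear_id)

lemma alg_hom_vlinear: "alg_hom F \<Longrightarrow> vlinear I F"
  by (simp add: alg_hom_def)

lemma alg_hom_vec [simp]: "alg_hom F \<Longrightarrow> x \<in> vec I \<Longrightarrow> F x \<in> vec I"
  by (simp add: alg_hom_def vlinear_apply_vec)

lemma alg_hom_mult: "alg_hom F \<Longrightarrow> x \<in> vec I \<Longrightarrow> y \<in> vec I \<Longrightarrow> F (M x y) = M (F x) (F y)"
  by (simp add: alg_hom_def)

lemma alg_hom_unit [simp]: "alg_hom F \<Longrightarrow> F u = u"
  by (simp add: alg_hom_def)

lemma alg_hom_if_alg_aut:
  assumes "is_alg_aut I c u f"
  shows "alg_hom f"
proof -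
  have "\<forall>x\<in>vec I. f x \<in> vec I"
    using assms bij_betwE by (auto simp: is_alg_aut_def)
  with assms show ?thesis
    unfolding is_alg_aut_def alg_hom_def vlinear_def by blast
qed

lemma vtensor_sc_mult_bvec:
  "p \<in> I \<times> I \<Longrightarrow> q \<in> I \<times> I \<Longrightarrow> r \<in> I \<times> I \<Longrightarrow>
   vtensor (M (bvec (fst p)) (bvec (fst q))) (M (bvec (snd q)) (bvec (snd p))) r = env_C c p q r"
  by (auto simp: vtensor_def env_C_def sc_mult_bvec split_beta)

text \<open>In the enveloping algebra (a \<otimes> b)(a' \<otimes> b') = a a' \<otimes> b' b, so expanding a product
  over the basis reduces statements about the enveloping multiplication to pure tensors.\<close>
lemma vcomb_env_mult:
  "vcomb (I \<times> I) (env_mult x y) Q = vsum (I \<times> I) (\<lambda>p. vsum (I \<times> I) (\<lambda>q. vsmult (x p * y q)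
     (vcomb (I \<times> I)
       (vtensor (M (bvec (fst p)) (bvec (fst q))) (M (bvec (snd q)) (bvec (snd p)))) Q)))"
proof
  fix i
  have "vcomb (I \<times> I) (env_mult x y) Q i =
      (\<Sum>r\<in>I \<times> I. (\<Sum>p\<in>I \<times> I. \<Sum>q\<in>I \<times> I. x p * y q * env_C c p q r) * Q r i)"
    unfolding vcomb_def vsum_def vsmult_def sc_mult_def by (rule sum.cong[OF refl]) simp
  also have "\<dots> = (\<Sum>r\<in>I \<times> I. \<Sum>p\<in>I \<times> I. \<Sum>q\<in>I \<times> I. x p * y q * env_C c p q r * Q r i)"
    by (simp only: sum_distrib_right)
  also have "\<dots> = (\<Sum>p\<in>I \<times> I. \<Sum>r\<in>I \<times> I. \<Sum>q\<in>I \<times> I. x p * y q * env_C c p q r * Q r i)"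
    by (rule sum.swap)
  also have "\<dots> = (\<Sum>p\<in>I \<times> I. \<Sum>q\<in>I \<times> I. \<Sum>r\<in>I \<times> I. x p * y q * env_C c p q r * Q r i)"
    by (rule sum.cong[OF refl], rule sum.swap)
  also have "\<dots> = (\<Sum>p\<in>I \<times> I. \<Sum>q\<in>I \<times> I. \<Sum>r\<in>I \<times> I. x p * y q *
       (vtensor (M (bvec (fst p)) (bvec (fst q))) (M (bvec (snd q)) (bvec (snd p))) r * Q r i))"
    by (intro sum.cong refl) (simp add: vtensor_sc_mult_bvec mult.assoc)
  also have "\<dots> = vsum (I \<times> I) (\<lambda>p. vsum (I \<times> I) (\<lambda>q. vsmult (x p * y q)
     (vcomb (I \<times> I)
       (vtensor (M (bvec (fst p)) (bvec (fst q))) (M (bvec (snd q)) (bvec (snd p)))) Q))) i"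
    unfolding vcomb_def vsum_def vsmult_def by (simp only: sum_distrib_left)
  finally show "vcomb (I \<times> I) (env_mult x y) Q i = \<dots>" .
qed

lemma env_act_vtensor:
  assumes "vlinear I F" and "vlinear I G" and "a \<in> vec I" and "b \<in> vec I"
  shows "env_act I c F G (vtensor a b) m = M (M (F a) m) (G b)"
  unfolding env_act_def vcomb_vtensor fst_conv snd_conv
  using assms
  by (intro bilinear_eq_vsum_bvec[where \<Phi> = "\<lambda>x y. M (M (F x) m) (G y)"]
      vlinear_comp[OF vlinear_sc_mult_left] vlinear_comp[OF vlinear_sc_mult_right]) simp_all

lemma env_u_eq_vtensor: "env_u u = vtensor u u"
  by (simp add: env_u_def vtensor_def fun_eq_iff split_beta)

lemma env_act_unit: "alg_hom F \<Longrightarrow> alg_hom G \<Longrightarrow> m \<in> vec I \<Longrightarrow> env_act I c F G (env_u u) m = m"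
  by (simp add: env_u_eq_vtensor env_act_vtensor alg_hom_vlinear)

lemma env_act_vsmult_unit:
  "alg_hom F \<Longrightarrow> alg_hom G \<Longrightarrow> m \<in> vec I \<Longrightarrow> env_act I c F G (vsmult a (env_u u)) m = vsmult a m"
  using env_act_unit[unfolded env_act_def] by (simp add: env_act_def vcomb_vsmult)

lemma env_act_env_mult:
  assumes F: "alg_hom F" and G: "alg_hom G" and m: "m \<in> vec I"
  shows "env_act I c F G (env_mult x y) m = env_act I c F G x (env_act I c F G y m)"
proof -
  let ?b = "bvec :: 'i \<Rightarrow> 'i \<Rightarrow> 'o"
  have "env_act I c F G (env_mult x y) m = vsum (I \<times> I) (\<lambda>p. vsum (I \<times> I) (\<lambda>q. vsmult (x p * y q)
     (env_act I c F G (vtensor (M (?b (fst p)) (?b (fst q))) (M (?b (snd q)) (?b (snd p)))) m)))"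
    unfolding env_act_def[of I c F G "env_mult x y"] vcomb_env_mult env_act_def ..
  also have "\<dots> = vsum (I \<times> I) (\<lambda>p. vsum (I \<times> I) (\<lambda>q. vsmult (x p * y q)
     (M (M (F (M (?b (fst p)) (?b (fst q)))) m) (G (M (?b (snd q)) (?b (snd p)))))))"
    by (rule vsum_cong, rule vsum_cong) (simp add: env_act_vtensor alg_hom_vlinear F G)
  also have "\<dots> = vsum (I \<times> I) (\<lambda>p. vsum (I \<times> I) (\<lambda>q. vsmult (x p * y q)
     (M (M (F (?b (fst p))) (M (M (F (?b (fst q))) m) (G (?b (snd q))))) (G (?b (snd p))))))"
    by (rule vsum_cong, rule vsum_cong)
      (auto simp: alg_hom_mult[OF F] alg_hom_mult[OF G] alg_hom_vec[OF F] alg_hom_vec[OF G] m)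
  also have "\<dots> = env_act I c F G x (env_act I c F G y m)"
    by (simp add: env_act_def vcomb_def sc_mult_vsum_left sc_mult_vsum_right sc_mult_vsmult_left
        sc_mult_vsmult_right vsmult_vsum)
  finally show ?thesis .
qed

end

lemma sc_mult_opposite: "sc_mult I (\<lambda>i j k. c j i k) x y = sc_mult I c y x"
proof
  fix k
  have "(\<Sum>i\<in>I. \<Sum>j\<in>I. x i * y j * c j i k) = (\<Sum>j\<in>I. \<Sum>i\<in>I. y j * x i * c j i k)"
    by (subst sum.swap) (simp add: mult.commute)
  then show "sc_mult I (\<lambda>i j k. c j i k) x y k = sc_mult I c y x k"
    by (simp add: sc_mult_def)
qed

lemma sc_algebra_opposite:
  assumes "sc_algebra I c u"
  shows "sc_algebra I (\<lambda>i j k. c j i k) u"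
proof -
  interpret sc_alg I c u
    using assms by (rule sc_alg.intro)
  show ?thesis
    unfolding sc_algebra_def sc_mult_opposite[of I c] by simp
qed

section \<open>The bimodule of endomorphisms\<close>

definition mat_apply :: "'i set \<Rightarrow> ('i \<times> 'i \<Rightarrow> 'a::comm_ring_1) \<Rightarrow> ('i \<Rightarrow> 'a) \<Rightarrow> 'i \<Rightarrow> 'a" where
  "mat_apply I P x = (\<lambda>q. if q \<in> I then (\<Sum>p\<in>I. x p * P (p, q)) else 0)"

definition mat_of :: "'i set \<Rightarrow> (('i \<Rightarrow> 'a::comm_ring_1) \<Rightarrow> ('i \<Rightarrow> 'a)) \<Rightarrow> 'i \<times> 'i \<Rightarrow> 'a" where
  "mat_of I H = (\<lambda>r. if fst r \<in> I \<and> snd r \<in> I then H (bvec (fst r)) (snd r) else 0)"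

lemma mat_apply_vec [simp]: "mat_apply I P x \<in> vec I"
  by (simp add: mat_apply_def vec_def)

lemma mat_of_vec [simp]: "mat_of I H \<in> vec (I \<times> I)"
  by (auto simp: mat_of_def vec_def)

lemma mat_apply_vadd: "mat_apply I P (vadd x y) = vadd (mat_apply I P x) (mat_apply I P y)"
  by (auto simp: mat_apply_def vec_op_defs fun_eq_iff sum.distrib distrib_right)

lemma mat_apply_vsmult: "mat_apply I P (vsmult a x) = vsmult a (mat_apply I P x)"
  by (auto simp: mat_apply_def vec_op_defs fun_eq_iff sum_distrib_left mult.assoc)

lemma mat_apply_vadd_matrix: "mat_apply I (vadd P Q) x = vadd (mat_apply I P x) (mat_apply I Q x)"
  by (auto simp: mat_apply_def vec_op_defs fun_eq_iff sum.distrib distrib_left)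

lemma vlinear_mat_apply: "vlinear I (mat_apply I P)"
  by (simp add: vlinear_def mat_apply_vadd mat_apply_vsmult)

lemma mat_apply_mat_of:
  assumes fin: "finite I" and H: "vlinear I H" and x: "x \<in> vec I"
  shows "mat_apply I (mat_of I H) x = H x"
proof
  fix q
  show "mat_apply I (mat_of I H) x q = H x q"
  proof (cases "q \<in> I")
    case True
    then have "mat_apply I (mat_of I H) x q = vsum I (\<lambda>p. vsmult (x p) (H (bvec p))) q"
      by (simp add: mat_apply_def mat_of_def vec_op_defs)
    also have "vsum I (\<lambda>p. vsmult (x p) (H (bvec p))) = H x"
      using vlinear_apply_vsum[OF H fin, of bvec x] vec_eq_vsum_bvec[OF fin x] by simp
    finally show ?thesis .
  next
    case False
    with vlinear_apply_vec[OF H x] show ?thesis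
      by (simp add: mat_apply_def vec_def)
  qed
qed

lemma mat_of_mat_apply:
  fixes P :: "'i \<times> 'i \<Rightarrow> 'a::comm_ring_1"
  assumes fin: "finite I" and P: "P \<in> vec (I \<times> I)"
  shows "mat_of I (mat_apply I P) = P"
proof
  fix r :: "'i \<times> 'i"
  obtain p q where r: "r = (p, q)"
    by (cases r)
  show "mat_of I (mat_apply I P) r = P r"
    using fin P by (auto simp: r mat_of_def mat_apply_def sum_bvec_mult vec_def)
qed

lemma mat_of_vadd: "mat_of I (\<lambda>x. vadd (H1 x) (H2 x)) = vadd (mat_of I H1) (mat_of I H2)"
  by (auto simp: mat_of_def vec_op_defs fun_eq_iff)

lemma mat_of_cong: "(\<And>x. x \<in> vec I \<Longrightarrow> H1 x = H2 x) \<Longrightarrow> mat_of I H1 = mat_of I H2"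
  by (auto simp: mat_of_def fun_eq_iff)

lemma mat_of_inj:
  "finite I \<Longrightarrow> vlinear I H1 \<Longrightarrow> vlinear I H2 \<Longrightarrow> mat_of I H1 = mat_of I H2 \<Longrightarrow> x \<in> vec I \<Longrightarrow> H1 x = H2 x"
  by (metis mat_apply_mat_of)

context sc_alg
begin

text \<open>The bimodule Hom(\<Lambda>, \<Lambda>) over the enveloping algebra, where a \<otimes> b acts on the left by
  m \<mapsto> f(a) m g(b) on the target and on the right by m \<mapsto> a m b on the source. Endomorphisms are
  stored as I \<times> I matrices, so the carrier has the type over which the annihilator ideal
  quantifies.\<close>
definition twisted_end :: "(('i \<Rightarrow> 'o) \<Rightarrow> ('i \<Rightarrow> 'o)) \<Rightarrow> (('i \<Rightarrow> 'o) \<Rightarrow> ('i \<Rightarrow> 'o))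
    \<Rightarrow> ('i \<times> 'i \<Rightarrow> 'o, 'i \<times> 'i \<Rightarrow> 'o) bimod" where
  "twisted_end f g = \<lparr>bm_carrier = vec (I \<times> I), bm_add = vadd, bm_zero = (\<lambda>_. 0),
     bm_lact = (\<lambda>y P. mat_of I (\<lambda>x. env_act I c f g y (mat_apply I P x))),
     bm_ract = (\<lambda>P y. mat_of I (\<lambda>x. mat_apply I P (env_act I c (\<lambda>z. z) (\<lambda>z. z) y x)))\<rparr>"

lemma twisted_end_is_bimodule:
  assumes f: "alg_hom f" and g: "alg_hom g"
  shows "is_bimodule (I \<times> I) (env_C c) (env_u u) (twisted_end f g)"
proof -
  let ?la = "\<lambda>y P. mat_of I (\<lambda>x. env_act I c f g y (mat_apply I P x))"
  let ?ra = "\<lambda>P y. mat_of I (\<lambda>x. mat_apply I P (env_act I c (\<lambda>z. z) (\<lambda>z. z) y x))"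
  have la_vadd_ring: "?la (vadd x y) t = vadd (?la x t) (?la y t)" for x y t
    by (simp add: env_act_vadd mat_of_vadd)
  have la_vadd_module: "?la x (vadd s t) = vadd (?la x s) (?la x t)" for x s t
    by (simp add: mat_apply_vadd_matrix vlinear_apply_vadd[OF vlinear_env_act]
        mat_of_vadd[symmetric])
  have la_mult: "?la (env_mult x y) t = ?la x (?la y t)" for x y t
    by (rule mat_of_cong)
      (simp add: env_act_env_mult f g mat_apply_mat_of
        vlinear_comp[OF vlinear_env_act vlinear_mat_apply])
  have la_unit: "?la (env_u u) t = t" if "t \<in> vec (I \<times> I)" for t
    using mat_of_mat_apply[OF finite_I that] by (simp add: env_act_unit f g cong: mat_of_cong)
  have ra_vadd_ring: "?ra t (vadd x y) = vadd (?ra t x) (?ra t y)" for x y t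
    by (simp add: env_act_vadd mat_apply_vadd mat_of_vadd)
  have ra_vadd_module: "?ra (vadd s t) x = vadd (?ra s x) (?ra t x)" for x s t
    by (simp add: mat_apply_vadd_matrix mat_of_vadd)
  have ra_mult: "?ra t (env_mult x y) = ?ra (?ra t x) y" for x y t
    by (rule mat_of_cong)
      (simp add: env_act_env_mult alg_hom_id mat_apply_mat_of
        vlinear_comp[OF vlinear_mat_apply vlinear_env_act])
  have ra_unit: "?ra t (env_u u) = t" if "t \<in> vec (I \<times> I)" for t
    using mat_of_mat_apply[OF finite_I that]
    by (simp add: env_act_unit alg_hom_id cong: mat_of_cong)
  have la_ra: "?la x (?ra t y) = ?ra (?la x t) y" for x y t
    by (rule mat_of_cong)
      (simp add: mat_apply_mat_of vlinear_comp[OF vlinear_mat_apply vlinear_env_act]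
        vlinear_comp[OF vlinear_env_act vlinear_mat_apply])
  have central: "?la (vsmult a (env_u u)) t = ?ra t (vsmult a (env_u u))" for a t
    by (rule mat_of_cong) (simp add: env_act_vsmult_unit f g alg_hom_id mat_apply_vsmult)
  have neg: "\<exists>t'\<in>vec (I \<times> I). vadd t t' = (\<lambda>_. 0)" if "t \<in> vec (I \<times> I)" for t :: "'i \<times> 'i \<Rightarrow> 'o"
    using that by (intro bexI[of _ "\<lambda>i. - t i"]) (auto simp: vec_def vadd_def)
  show ?thesis
    unfolding is_bimodule_def Let_def twisted_end_def bimod.simps
    by (simp add: la_vadd_ring la_vadd_module la_mult la_unit ra_vadd_ring ra_vadd_module ra_mult
        ra_unit la_ra central neg)
      (simp add: vec_op_defs algebra_simps)
qed

end

section \<open>Twisted derivations\<close>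

locale twisted_der = sc_alg I c u
  for I :: "'i set" and c :: "'i \<Rightarrow> 'i \<Rightarrow> 'i \<Rightarrow> 'o::comm_ring_1" and u +
  fixes f g \<delta> :: "('i \<Rightarrow> 'o) \<Rightarrow> ('i \<Rightarrow> 'o)"
  assumes hom_f: "alg_hom f" and hom_g: "alg_hom g" and vlinear_der: "vlinear I \<delta>"
    and der_mult: "\<And>a b. a \<in> vec I \<Longrightarrow> b \<in> vec I \<Longrightarrow> \<delta> (M a b) = vadd (M (f a) (\<delta> b)) (M (\<delta> a) (g b))"
begin

lemma der_vec [simp]: "a \<in> vec I \<Longrightarrow> \<delta> a \<in> vec I"
  using vlinear_der by (simp add: vlinear_apply_vec)

lemma hom_f_vec [simp]: "a \<in> vec I \<Longrightarrow> f a \<in> vec I"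
  using hom_f by simp

lemma hom_g_vec [simp]: "a \<in> vec I \<Longrightarrow> g a \<in> vec I"
  using hom_g by simp

lemma der_unit: "\<delta> u = (\<lambda>_. 0)"
proof -
  have "\<delta> u = \<delta> (M u u)"
    by simp
  also have "\<dots> = vadd (\<delta> u) (\<delta> u)"
    using der_mult[of u u] hom_f hom_g by simp
  finally show ?thesis
    by (simp add: vadd_def fun_eq_iff)
qed

text \<open>The twisted derivation \<delta> lifts to the derivation a \<otimes> b \<mapsto> (z \<mapsto> \<delta>(a) g(z b)) of the enveloping
  algebra into the bimodule above; evaluating an inner presentation of it at u gives back \<delta>.\<close>
definition env_der_fun :: "('i \<times> 'i \<Rightarrow> 'o) \<Rightarrow> ('i \<Rightarrow> 'o) \<Rightarrow> 'i \<Rightarrow> 'o" where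
  "env_der_fun y z = vcomb (I \<times> I) y (\<lambda>p. M (\<delta> (bvec (fst p))) (g (M z (bvec (snd p)))))"

lemma vlinear_env_der_fun: "vlinear I (env_der_fun y)"
  unfolding env_der_fun_def vcomb_def
  by (intro vlinear_vsum vlinear_vsmult vlinear_comp[OF vlinear_sc_mult_right
      vlinear_comp[OF alg_hom_vlinear[OF hom_g] vlinear_sc_mult_left]])

lemma env_der_fun_vec[simp]: "env_der_fun y z \<in> vec I"
  by (simp add: env_der_fun_def vcomb_vec)

lemma env_der_fun_vadd: "env_der_fun (vadd x y) z = vadd (env_der_fun x z) (env_der_fun y z)"
  by (simp add: env_der_fun_def vcomb_vadd)

lemma env_der_fun_vsmult: "env_der_fun (vsmult a x) z = vsmult a (env_der_fun x z)"
  by (simp add: env_der_fun_def vcomb_vsmult)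

lemma env_der_fun_vtensor:
  assumes "a \<in> vec I" and "b \<in> vec I"
  shows "env_der_fun (vtensor a b) z = M (\<delta> a) (g (M z b))"
  unfolding env_der_fun_def vcomb_vtensor fst_conv snd_conv
  using assms
  by (intro bilinear_eq_vsum_bvec[where \<Phi> = "\<lambda>x y. M (\<delta> x) (g (M z y))"]
      vlinear_comp[OF vlinear_sc_mult_left vlinear_der]
      vlinear_comp[OF vlinear_sc_mult_right
        vlinear_comp[OF alg_hom_vlinear[OF hom_g] vlinear_sc_mult_right]])
    simp_all

lemma env_der_fun_env_mult:
  assumes z: "z \<in> vec I"
  shows "env_der_fun (env_mult x y) z =
    vadd (env_act I c f g x (env_der_fun y z)) (env_der_fun x (env_act I c (\<lambda>w. w) (\<lambda>w. w) y z))"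
proof -
  let ?b = "bvec :: 'i \<Rightarrow> 'i \<Rightarrow> 'o"
  have expand_lhs: "env_der_fun (env_mult x y) z =
      vsum (I \<times> I) (\<lambda>p. vsum (I \<times> I) (\<lambda>q. vsmult (x p * y q)
     (M (\<delta> (M (?b (fst p)) (?b (fst q)))) (g (M z (M (?b (snd q)) (?b (snd p))))))))"
    unfolding env_der_fun_def[of "env_mult x y"] vcomb_env_mult
    by (rule vsum_cong, rule vsum_cong) (auto simp: env_der_fun_vtensor[unfolded env_der_fun_def])
  have expand_twisted: "env_act I c f g x (env_der_fun y z) =
      vsum (I \<times> I) (\<lambda>p. vsum (I \<times> I) (\<lambda>q. vsmult (x p * y q)
     (M (M (f (?b (fst p))) (M (\<delta> (?b (fst q))) (g (M z (?b (snd q)))))) (g (?b (snd p))))))"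
    by (simp add: env_act_def env_der_fun_def vcomb_def sc_mult_vsum_left sc_mult_vsum_right
        sc_mult_vsmult_left sc_mult_vsmult_right vsmult_vsum)
  have expand_untwisted: "env_der_fun x (env_act I c (\<lambda>w. w) (\<lambda>w. w) y z) =
      vsum (I \<times> I) (\<lambda>p. vsum (I \<times> I) (\<lambda>q. vsmult (x p * y q)
     (M (\<delta> (?b (fst p))) (g (M (M (M (?b (fst q)) z) (?b (snd q))) (?b (snd p)))))))"
    unfolding env_der_fun_def[of x] vcomb_def
  proof (rule vsum_cong)
    fix p :: "'i \<times> 'i"
    have "vlinear I (\<lambda>m. M (\<delta> (?b (fst p))) (g (M m (?b (snd p)))))"
      by (rule vlinear_comp[OF vlinear_sc_mult_right
          vlinear_comp[OF alg_hom_vlinear[OF hom_g] vlinear_sc_mult_left]])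
    from vlinear_apply_vsum[OF this, of "I \<times> I" "\<lambda>q. M (M (?b (fst q)) z) (?b (snd q))" y]
    show "vsmult (x p) (M (\<delta> (?b (fst p))) (g (M (env_act I c (\<lambda>w. w) (\<lambda>w. w) y z) (?b (snd p))))) =
      vsum (I \<times> I) (\<lambda>q. vsmult (x p * y q)
        (M (\<delta> (?b (fst p))) (g (M (M (M (?b (fst q)) z) (?b (snd q))) (?b (snd p))))))"
      by (simp add: env_act_def vcomb_def vsmult_vsum)
  qed
  have leibniz_basis: "M (\<delta> (M (?b (fst p)) (?b (fst q)))) (g (M z (M (?b (snd q)) (?b (snd p))))) =
     vadd (M (M (f (?b (fst p))) (M (\<delta> (?b (fst q))) (g (M z (?b (snd q)))))) (g (?b (snd p))))
          (M (\<delta> (?b (fst p))) (g (M (M (M (?b (fst q)) z) (?b (snd q))) (?b (snd p)))))"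
    if "p \<in> I \<times> I" "q \<in> I \<times> I" for p q
    using that z by (auto simp: der_mult sc_mult_vadd_left alg_hom_mult[OF hom_g])
  show ?thesis
    unfolding expand_lhs expand_twisted expand_untwisted vsum_vadd[symmetric] vsmult_vadd[symmetric]
    by (rule vsum_cong, rule vsum_cong) (simp add: leibniz_basis)
qed

definition env_der :: "('i \<times> 'i \<Rightarrow> 'o) \<Rightarrow> 'i \<times> 'i \<Rightarrow> 'o" where
  "env_der y = mat_of I (env_der_fun y)"

lemma env_der_is_derivation: "is_derivation (I \<times> I) (env_C c) (env_u u) (twisted_end f g) env_der"
proof -
  have additive: "env_der (vadd x y) = vadd (env_der x) (env_der y)" for x y
    unfolding env_der_def mat_of_vadd[symmetric] by (rule mat_of_cong) (rule env_der_fun_vadd)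
  have homogeneous: "env_der (vsmult a x) =
      mat_of I (\<lambda>z. env_act I c f g (vsmult a (env_u u)) (mat_apply I (env_der x) z))" for a x
    unfolding env_der_def
    by (rule mat_of_cong) (simp add: env_der_fun_vsmult mat_apply_mat_of vlinear_env_der_fun
        env_act_vsmult_unit hom_f hom_g)
  have leibniz: "env_der (env_mult x y) =
      vadd (mat_of I (\<lambda>z. env_act I c f g x (mat_apply I (env_der y) z)))
        (mat_of I (\<lambda>z. mat_apply I (env_der x) (env_act I c (\<lambda>w. w) (\<lambda>w. w) y z)))" for x y
    unfolding env_der_def mat_of_vadd[symmetric]
    by (rule mat_of_cong) (simp add: env_der_fun_env_mult mat_apply_mat_of vlinear_env_der_fun)
  show ?thesis
    unfolding is_derivation_def twisted_end_def bimod.simps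
    using additive homogeneous leibniz by (simp add: env_der_def)
qed

lemma inner_env_der_vtensor:
  assumes P: "P \<in> vec (I \<times> I)" and a: "a \<in> vec I" and b: "b \<in> vec I" and z: "z \<in> vec I"
    and inner: "bm_lact (twisted_end f g) (vtensor a b) P =
      bm_add (twisted_end f g)
        (bm_lact (twisted_end f g) (vsmult a0 (env_u u)) (env_der (vtensor a b)))
        (bm_ract (twisted_end f g) P (vtensor a b))"
  shows "M (M (f a) (mat_apply I P z)) (g b) =
    vadd (vsmult a0 (M (\<delta> a) (g (M z b)))) (mat_apply I P (M (M a z) b))"
proof -
  let ?E = "mat_apply I (env_der (vtensor a b))"
  have "mat_of I (\<lambda>z. env_act I c f g (vtensor a b) (mat_apply I P z)) =
      mat_of I (\<lambda>z. vadd (env_act I c f g (vsmult a0 (env_u u)) (?E z))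
        (mat_apply I P (env_act I c (\<lambda>w. w) (\<lambda>w. w) (vtensor a b) z)))"
    using inner unfolding twisted_end_def bimod.simps mat_of_vadd .
  from mat_of_inj[OF finite_I _ _ this z] have "env_act I c f g (vtensor a b) (mat_apply I P z) =
      vadd (env_act I c f g (vsmult a0 (env_u u)) (?E z))
        (mat_apply I P (env_act I c (\<lambda>w. w) (\<lambda>w. w) (vtensor a b) z))"
    by (simp add: vlinear_comp[OF vlinear_env_act vlinear_mat_apply] vlinear_vadd
        vlinear_comp[OF vlinear_mat_apply vlinear_env_act])
  moreover have "?E z = M (\<delta> a) (g (M z b))"
    using z by (simp add: env_der_def mat_apply_mat_of vlinear_env_der_fun env_der_fun_vtensor a b)
  ultimately show ?thesis
    using a b z
    by (simp add: env_act_vtensor env_act_vsmult_unit alg_hom_vlinear vlinear_id hom_f hom_g)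
qed

lemma twisted_der_inner_if_ann_ideal:
  assumes "a0 \<in> ann_ideal (I \<times> I) (env_C c) (env_u u)"
  shows "\<exists>t\<in>vec I. \<forall>a\<in>vec I. vsmult a0 (\<delta> a) = vsub (M (f a) t) (M t (g a))"
proof -
  obtain P where P: "P \<in> vec (I \<times> I)" and inner: "\<And>y. y \<in> vec (I \<times> I) \<Longrightarrow>
      bm_lact (twisted_end f g) y P =
      bm_add (twisted_end f g) (bm_lact (twisted_end f g) (vsmult a0 (env_u u)) (env_der y))
        (bm_ract (twisted_end f g) P y)"
    using assms twisted_end_is_bimodule[OF hom_f hom_g] env_der_is_derivation
    unfolding ann_ideal_def is_inner_derivation_def by (fastforce simp: twisted_end_def)
  define t where "t = mat_apply I P u"
  have "M (f a) t = vadd (vsmult a0 (\<delta> a)) (mat_apply I P a)" if "a \<in> vec I" for a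
    using inner_env_der_vtensor[OF P that unit_vec unit_vec inner] that by (simp add: t_def hom_g)
  moreover have "M t (g b) = mat_apply I P b" if "b \<in> vec I" for b
    using inner_env_der_vtensor[OF P unit_vec that unit_vec inner] that
    by (simp add: t_def der_unit hom_f vsmult_def vadd_def)
  ultimately show ?thesis
    by (intro bexI[of _ t]) (auto simp: t_def vec_op_defs fun_eq_iff)
qed

end

context sc_alg
begin

lemma twisted_der_inner:
  assumes f: "alg_hom f" and g: "alg_hom g" and w: "w \<in> vec I"
  shows "twisted_der I c u f g (\<lambda>x. vsub (M (f x) w) (M w (g x)))"
proof unfold_locales
  show "vlinear I (\<lambda>x. vsub (M (f x) w) (M w (g x)))"
    using f g unfolding vlinear_def
    by (auto simp: vlinear_apply_vadd[OF alg_hom_vlinear[OF f]]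
        vlinear_apply_vadd[OF alg_hom_vlinear[OF g]] vlinear_apply_vsmult[OF alg_hom_vlinear[OF f]]
        vlinear_apply_vsmult[OF alg_hom_vlinear[OF g]]
        sc_mult_vadd_left sc_mult_vadd_right sc_mult_vsmult_left sc_mult_vsmult_right)
      (auto simp: vec_op_defs algebra_simps)
  show "vsub (M (f (M a b)) w) (M w (g (M a b))) =
      vadd (M (f a) (vsub (M (f b) w) (M w (g b)))) (M (vsub (M (f a) w) (M w (g a))) (g b))"
    if "a \<in> vec I" and "b \<in> vec I" for a b
    using that f g w
    by (simp add: alg_hom_mult sc_mult_vsub_left sc_mult_vsub_right) (simp add: vec_op_defs)
qed (use sc_algebra f g in auto)

end

locale sc_alg_idom = sc_alg I c u
  for I :: "'i set" and c :: "'i \<Rightarrow> 'i \<Rightarrow> 'i \<Rightarrow> 'o::idom" and u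
begin

lemma twisted_der_vdiv:
  assumes "twisted_der I c u f g e" and p: "p \<noteq> 0" and dvd: "\<And>x i. x \<in> vec I \<Longrightarrow> p dvd e x i"
  shows "twisted_der I c u f g (\<lambda>x. vdiv p (e x))"
proof -
  interpret twisted_der I c u f g e
    by fact
  have div: "vsmult p (vdiv p (e x)) = e x" if "x \<in> vec I" for x
    using dvd[OF that] by (rule vsmult_vdiv)
  show ?thesis
  proof unfold_locales
    show "vlinear I (\<lambda>x. vdiv p (e x))"
      using vlinear_der p dvd by (rule vlinear_vdiv)
    fix a b :: "'i \<Rightarrow> 'o"
    assume a: "a \<in> vec I" and b: "b \<in> vec I"
    have "vsmult p (vdiv p (e (M a b))) = vadd (M (f a) (e b)) (M (e a) (g b))"
      unfolding div[OF sc_mult_vec] by (rule der_mult[OF a b])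
    also have "\<dots> = vadd (M (f a) (vsmult p (vdiv p (e b)))) (M (vsmult p (vdiv p (e a))) (g b))"
      unfolding div[OF a] div[OF b] ..
    also have "\<dots> = vsmult p (vadd (M (f a) (vdiv p (e b))) (M (vdiv p (e a)) (g b)))"
      by (simp only: vsmult_vadd sc_mult_vsmult_left sc_mult_vsmult_right)
    finally show "vdiv p (e (M a b)) = vadd (M (f a) (vdiv p (e b))) (M (vdiv p (e a)) (g b))"
      by (rule vsmult_cancel[OF p])
  qed (use sc_algebra hom_f hom_g in auto)
qed

end

section \<open>Congruences modulo powers of pi and pi-adic limits\<close>

lemma cong_pi_trans [trans]: "cong_pi p n x y \<Longrightarrow> cong_pi p n y z \<Longrightarrow> cong_pi p n x z"
  unfolding cong_pi_def by (metis diff_add_cancel add_diff_eq dvd_add)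

lemma cong_pi_mono: "m \<le> n \<Longrightarrow> cong_pi p n x y \<Longrightarrow> cong_pi p m x y"
  unfolding cong_pi_def by (meson dvd_trans le_imp_power_dvd)

lemma dvd_sc_mult_left: "(\<And>i. (a :: 'a::comm_ring_1) dvd x i) \<Longrightarrow> a dvd sc_mult J C x y k"
  unfolding sc_mult_def by (auto intro!: dvd_sum dvd_mult2[OF dvd_mult2])

lemma dvd_sc_mult_right: "(\<And>i. (a :: 'a::comm_ring_1) dvd y i) \<Longrightarrow> a dvd sc_mult J C x y k"
  unfolding sc_mult_def by (auto intro!: dvd_sum dvd_mult2[OF dvd_mult])

lemma dvd_sc_mult_mult:
  assumes x: "\<And>i. a dvd x i" and y: "\<And>i. (b :: 'a::comm_ring_1) dvd y i"
  shows "a * b dvd sc_mult J C x y k"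
proof -
  have "a * b dvd x i * y j * C i j k" for i j
    by (rule dvd_mult2, rule mult_dvd_mono[OF x y])
  then show ?thesis
    unfolding sc_mult_def by (simp add: dvd_sum)
qed

lemma cong_pi_sc_mult_left:
  assumes "cong_pi p n x y"
  shows "cong_pi p n (sc_mult J C x z) (sc_mult J C y z)"
  unfolding cong_pi_def
proof
  fix k
  have "p ^ n dvd sc_mult J C (vsub x y) z k"
    using assms by (intro dvd_sc_mult_left) (simp add: cong_pi_def vsub_def)
  then show "p ^ n dvd sc_mult J C x z k - sc_mult J C y z k"
    by (simp only: sc_mult_vsub_left) (simp only: vsub_def)
qed

lemma cong_pi_sc_mult_right:
  assumes "cong_pi p n x y"
  shows "cong_pi p n (sc_mult J C z x) (sc_mult J C z y)"
  unfolding cong_pi_def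
proof
  fix k
  have "p ^ n dvd sc_mult J C z (vsub x y) k"
    using assms by (intro dvd_sc_mult_right) (simp add: cong_pi_def vsub_def)
  then show "p ^ n dvd sc_mult J C z x k - sc_mult J C z y k"
    by (simp only: sc_mult_vsub_right) (simp only: vsub_def)
qed

lemma cong_pi_vsub_vsmult_pow: "cong_pi p n (vsub x (vsmult (p ^ n) y)) x"
  by (simp add: cong_pi_def vec_op_defs)

lemma dvr_eq_0_if_pow_dvd:
  fixes pi y :: "'o::idom"
  assumes dvr: "dvr_uniformizer pi" and dvd: "\<And>n. pi ^ n dvd y"
  shows "y = 0"
proof (rule ccontr)
  assume "y \<noteq> 0"
  with dvr obtain v n where v: "v dvd 1" and y: "y = v * pi ^ n"
    unfolding dvr_uniformizer_def by blast
  have "pi ^ n * pi dvd pi ^ n * v"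
    using dvd[of "Suc n"] y by (simp add: mult.commute)
  then have "pi dvd v"
    using dvr by (simp add: dvr_uniformizer_def)
  then have "pi dvd 1"
    using v by (rule dvd_trans)
  with dvr show False
    by (simp add: dvr_uniformizer_def)
qed

lemma pi_complete_vec:
  assumes complete: "pi_complete pi" and X: "\<And>n. X n \<in> vec I"
    and cauchy: "\<And>n i. pi ^ n dvd (X (Suc n) i - X n i)"
  shows "\<exists>L\<in>vec I. \<forall>n i. pi ^ n dvd (L i - X n i)"
proof
  have "\<exists>x. \<forall>n. pi ^ n dvd (x - X n i)" for i
    using complete[unfolded pi_complete_def, rule_format, of "\<lambda>n. X n i", OF cauchy] .
  then have lim: "\<forall>n. pi ^ n dvd ((SOME x. \<forall>n. pi ^ n dvd (x - X n i)) - X n i)" for i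
    by (rule someI_ex)
  define L where "L = (\<lambda>i. if i \<in> I then (SOME x. \<forall>n. pi ^ n dvd (x - X n i)) else 0)"
  show "L \<in> vec I"
    by (simp add: L_def vec_def)
  show "\<forall>n i. pi ^ n dvd (L i - X n i)"
    using lim X by (auto simp: L_def vec_def)
qed

context sc_alg
begin

lemma geometric_sum_telescope:
  assumes e: "e \<in> vec I"
  shows "M (vsub u e) (vsum {..<n} (\<lambda>k. (M e ^^ k) u)) = vsub u ((M e ^^ n) u)"
proof (induction n)
  case 0
  then show ?case
    by (simp add: vsum_def vsub_def)
next
  case (Suc n)
  have pow_vec: "(M e ^^ n) u \<in> vec I"
    by (cases n) simp_all
  have "vsum {..<Suc n} (\<lambda>k. (M e ^^ k) u) = vadd (vsum {..<n} (\<lambda>k. (M e ^^ k) u)) ((M e ^^ n) u)"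
    by (simp add: vsum_def vadd_def)
  then show ?case
    using Suc pow_vec e by (simp add: sc_mult_vadd_right sc_mult_vsub_left) (simp add: vec_op_defs)
qed

end

context sc_alg_idom
begin

lemma right_inverse_if_cong_unit:
  assumes dvr: "dvr_uniformizer pi" and complete: "pi_complete pi"
    and a: "a \<in> vec I" and b: "b \<in> vec I" and ab: "cong_pi pi 1 (M a b) u"
  shows "\<exists>x\<in>vec I. M a x = u"
proof -
  define e where "e = vsub u (M a b)"
  have e: "e \<in> vec I"
    by (simp add: e_def)
  have ab_e: "M a b = vsub u e"
    by (simp add: e_def vsub_def)
  have e_dvd: "pi dvd e i" for i
    using ab unfolding e_def cong_pi_def vsub_def
    by (metis dvd_minus_iff minus_diff_eq power_one_right)
  have pow_vec: "(M e ^^ n) u \<in> vec I" for n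
    by (cases n) simp_all
  have pow_dvd: "pi ^ n dvd (M e ^^ n) u i" for n i
    by (induction n arbitrary: i) (simp_all add: dvd_sc_mult_mult e_dvd)
  define X where "X n = M b (vsum {..<n} (\<lambda>k. (M e ^^ k) u))" for n
  have a_X: "M a (X n) = vsub u ((M e ^^ n) u)" for n
    using a b e pow_vec by (simp add: X_def ab_e geometric_sum_telescope flip: mult_assoc)
  have "X (Suc n) i - X n i = M b ((M e ^^ n) u) i" for n i
    by (simp add: X_def sc_mult_def vsum_def sum.distrib algebra_simps)
  then obtain L where L: "L \<in> vec I" and lim: "\<And>n i. pi ^ n dvd (L i - X n i)"
    using pi_complete_vec[OF complete, of X I]
    by (auto simp: X_def intro: dvd_sc_mult_right pow_dvd)
  have "M a L k - u k = 0" for k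
  proof (rule dvr_eq_0_if_pow_dvd[OF dvr])
    fix n
    have "M a (vsub L (X n)) = vsub (M a L) (M a (X n))"
      by (rule sc_mult_vsub_right)
    then have "M a L k - u k = M a (vsub L (X n)) k - (M e ^^ n) u k"
      using a_X[of n] by (simp add: vsub_def fun_eq_iff)
    then show "pi ^ n dvd M a L k - u k"
      using pow_dvd by (simp add: dvd_sc_mult_right vsub_def lim)
  qed
  with L show ?thesis
    by (auto simp: fun_eq_iff)
qed

lemma inverse_if_cong_unit:
  assumes dvr: "dvr_uniformizer pi" and complete: "pi_complete pi"
    and w: "w \<in> vec I" "w' \<in> vec I" and "cong_pi pi 1 (M w w') u" "cong_pi pi 1 (M w' w) u"
  obtains x where "x \<in> vec I" "M w x = u" "M x w = u"
proof -
  obtain x where x: "x \<in> vec I" "M w x = u"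
    using right_inverse_if_cong_unit[OF dvr complete w] assms by blast
  interpret opposite: sc_alg_idom I "\<lambda>i j k. c j i k" u
    by unfold_locales (rule sc_algebra_opposite[OF sc_algebra])
  obtain y where y: "y \<in> vec I" "M y w = u"
    using opposite.right_inverse_if_cong_unit[OF dvr complete w(1) w(2)] assms
    unfolding sc_mult_opposite[of I c] by blast
  have "y = M y (M w x)"
    using x y by simp
  also have "\<dots> = M (M y w) x"
    using x(1) y(1) w(1) by simp
  also have "\<dots> = x"
    using x y by (simp del: mult_assoc)
  finally have "y = x" .
  with x y show thesis
    by (intro that) auto
qed

end

section \<open>Lifting outer equivalences\<close>

context sc_alg
begin

lemma cong_pi_intertwine_if_conj:
  assumes w: "w \<in> vec I" "w' \<in> vec I" and y: "y \<in> vec I"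
    and inv: "cong_pi p n (M w' w) u" and conj: "cong_pi p n x (M (M w y) w')"
  shows "cong_pi p n (M x w) (M w y)"
proof -
  have "M (M (M w y) w') w = M (M w y) (M w' w)"
    using w y by simp
  with cong_pi_sc_mult_left[OF conj] have "cong_pi p n (M x w) (M (M w y) (M w' w))"
    by metis
  also have "cong_pi p n \<dots> (M (M w y) u)"
    by (rule cong_pi_sc_mult_right[OF inv])
  also have "M (M w y) u = M w y"
    using w y by simp
  finally show ?thesis .
qed

lemma same_outer_if_intertwiner:
  assumes f: "alg_hom f" and W: "W \<in> vec I" "X \<in> vec I" "M W X = u" "M X W = u"
    and intertwine: "\<And>x. x \<in> vec I \<Longrightarrow> M (f x) W = M W (g x)"
  shows "same_outer I c u f g"
  unfolding same_outer_def
proof (intro bexI conjI ballI)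
  fix x :: "'i \<Rightarrow> 'o"
  assume x: "x \<in> vec I"
  have "f x = M (M (f x) W) X"
    using x f W by simp
  also have "\<dots> = M (M W (g x)) X"
    by (simp only: intertwine[OF x])
  finally show "f x = M (M W (g x)) X" .
qed (use W in auto)

end

context sc_alg_idom
begin

lemma exact_intertwiner:
  assumes f: "alg_hom f" and g: "alg_hom g" and ann: "p ^ d \<in> ann_ideal (I \<times> I) (env_C c) (env_u u)"
    and p: "p \<noteq> 0" and "d \<le> s" and w: "w \<in> vec I"
    and approx: "\<And>x. x \<in> vec I \<Longrightarrow> cong_pi p s (M (f x) w) (M w (g x))"
  obtains t where "t \<in> vec I"
    and "\<And>x. x \<in> vec I \<Longrightarrow>
      M (f x) (vsub w (vsmult (p ^ (s - d)) t)) = M (vsub w (vsmult (p ^ (s - d)) t)) (g x)"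
proof -
  let ?e = "\<lambda>x. vsub (M (f x) w) (M w (g x))"
  let ?\<delta> = "\<lambda>x. vdiv (p ^ s) (?e x)"
  have e_dvd: "p ^ s dvd ?e x i" if "x \<in> vec I" for x i
    using approx[OF that] by (simp add: cong_pi_def vsub_def)
  have "twisted_der I c u f g ?\<delta>"
    using twisted_der_inner[OF f g w] by (rule twisted_der_vdiv) (simp_all add: p e_dvd)
  then interpret \<delta>: twisted_der I c u f g ?\<delta> .
  obtain t where t: "t \<in> vec I"
    and inner: "\<And>a. a \<in> vec I \<Longrightarrow> vsmult (p ^ d) (?\<delta> a) = vsub (M (f a) t) (M t (g a))"
    using \<delta>.twisted_der_inner_if_ann_ideal[OF ann] by blast
  show thesis
  proof (rule that[OF t])
    fix x :: "'i \<Rightarrow> 'o"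
    assume x: "x \<in> vec I"
    have "p ^ s = p ^ (s - d) * p ^ d"
      using \<open>d \<le> s\<close> by (simp flip: power_add)
    then have "?e x = vsmult (p ^ (s - d)) (vsmult (p ^ d) (?\<delta> x))"
      using vsmult_vdiv[of "p ^ s" "?e x", OF e_dvd[OF x]] by simp
    also have "\<dots> = vsmult (p ^ (s - d)) (vsub (M (f x) t) (M t (g x)))"
      by (simp only: inner[OF x])
    finally have e: "?e x = \<dots>" .
    show "M (f x) (vsub w (vsmult (p ^ (s - d)) t)) = M (vsub w (vsmult (p ^ (s - d)) t)) (g x)"
      using fun_cong[OF e]
      by (simp add: sc_mult_vsub_left sc_mult_vsub_right sc_mult_vsmult_left sc_mult_vsmult_right)
        (simp add: vec_op_defs fun_eq_iff algebra_simps)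
  qed
qed

lemma same_outer_if_same_outer_mod:
  assumes dvr: "dvr_uniformizer pi" and complete: "pi_complete pi"
    and ann: "pi ^ d \<in> ann_ideal (I \<times> I) (env_C c) (env_u u)" and "d < s"
    and f: "alg_hom f" and g: "alg_hom g" and "same_outer_mod pi s I c u f g"
  shows "same_outer I c u f g"
proof -
  obtain w w' where w: "w \<in> vec I" "w' \<in> vec I"
    and ww': "cong_pi pi s (M w w') u" and w'w: "cong_pi pi s (M w' w) u"
    and conj: "\<And>x. x \<in> vec I \<Longrightarrow> cong_pi pi s (f x) (M (M w (g x)) w')"
    using \<open>same_outer_mod pi s I c u f g\<close> unfolding same_outer_mod_def by blast
  have approx: "cong_pi pi s (M (f x) w) (M w (g x))" if "x \<in> vec I" for x
    by (rule cong_pi_intertwine_if_conj[OF w _ w'w conj[OF that]]) (simp add: g that)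
  have "pi \<noteq> 0"
    using dvr by (simp add: dvr_uniformizer_def)
  then obtain t where t: "t \<in> vec I"
    and intertwine: "\<And>x. x \<in> vec I \<Longrightarrow>
      M (f x) (vsub w (vsmult (pi ^ (s - d)) t)) = M (vsub w (vsmult (pi ^ (s - d)) t)) (g x)"
    using exact_intertwiner[OF f g ann _ _ w(1) approx] \<open>d < s\<close> by auto
  let ?W = "vsub w (vsmult (pi ^ (s - d)) t)"
  have W: "?W \<in> vec I"
    using w t by simp
  have "cong_pi pi 1 ?W w"
    using \<open>d < s\<close> by (intro cong_pi_mono[OF _ cong_pi_vsub_vsmult_pow]) simp
  then have "cong_pi pi 1 (M ?W w') u" and "cong_pi pi 1 (M w' ?W) u"
    using \<open>d < s\<close> cong_pi_mono[OF _ ww'] cong_pi_mono[OF _ w'w]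
    by (auto intro: cong_pi_trans cong_pi_sc_mult_left cong_pi_sc_mult_right)
  then obtain X where "X \<in> vec I" "M ?W X = u" "M X ?W = u"
    by (rule inverse_if_cong_unit[OF dvr complete W w(2)])
  then show ?thesis
    using same_outer_if_intertwiner[OF f W] intertwine by blast
qed

end

theorem lemma3p3:
  fixes pi :: "'o::idom" and I :: "'i set"
    and c :: "'i \<Rightarrow> 'i \<Rightarrow> 'i \<Rightarrow> 'o" and u :: "'i \<Rightarrow> 'o" and d s :: nat
  assumes char0: "CHAR('o) = 0"
    and dvr: "dvr_uniformizer pi"
    and residue_char: "\<exists>p::nat. prime p \<and> pi dvd of_nat p"
    and complete: "pi_complete pi"
    and order: "sc_algebra I c u"
    and separable: "sc_separable I (\<lambda>i j k. Fract (c i j k) 1) (\<lambda>i. Fract (u i) 1)"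
    and depth: "is_depth pi (I \<times> I) (env_C c) (env_u u) d"
    and s_ge: "s \<ge> d + 1"
  shows "out_reduction_injective pi s I c u"
proof -
  \<comment> \<open>char0, residue_char and separable only guarantee that a depth exists; here it is given.\<close>
  interpret sc_alg_idom I c u
    by unfold_locales (rule order)
  have ann: "pi ^ d \<in> ann_ideal (I \<times> I) (env_C c) (env_u u)"
    using depth unfolding is_depth_def by force
  have "d < s"
    using s_ge by simp
  show ?thesis
    unfolding out_reduction_injective_def
  proof (intro allI impI)
    fix f g
    assume "is_alg_aut I c u f" "is_alg_aut I c u g" "same_outer_mod pi s I c u f g"
    then show "same_outer I c u f g"
      using same_outer_if_same_outer_mod[OF dvr complete ann \<open>d < s\<close>] alg_hom_if_alg_aut by blast
  qed
qed

end
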